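(* Let $R$ be a commutative ring and let $I, I_1,\ldots,I_n$ be ideals of $R$ with $I\subseteq \bigcup_{k=1}^{n} I_k$. If all but at most two of the ideals $I_1,\ldots,I_n$ are radical ideals, then $I\subseteq I_k$ for some $k$.
   Context: All rings are commutative with $1\neq 0$. An ideal $J$ is radical if $J=\sqrt{J}$. *)

theory Defs
  imports "HOL-Algebra.Algebra"
begin

definition ideal_radical :: "('a, 'b) ring_scheme \<Rightarrow> 'a set \<Rightarrow> 'a set" where
  "ideal_radical R J = {x \<in> carrier R. \<exists>m::nat. x [^]\<^bsub>R\<^esub> m \<in> J}"

definition radical_ideal :: "('a, 'b) ring_scheme \<Rightarrow> 'a set \<Rightarrow> bool" where
  "radical_ideal R J \<longleftrightarrow> ideal J R \<and> ideal_radical R J = J"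

end

theory Submission
  imports Defs
begin

text \<open>Prime avoidance: if \<open>I \<subseteq> I\<^sub>1 \<union> \<dots> \<union> I\<^sub>n\<close> is an irredundant cover with \<open>n \<ge> 2\<close> and all
  but two \<open>I\<^sub>k\<close> prime, pick \<open>a\<^sub>k \<in> I\<close> lying in \<open>I\<^sub>k\<close> only. Choose \<open>k\<^sub>0\<close> with \<open>I\<^sub>k\<^sub>0\<close> prime (any \<open>k\<^sub>0\<close>
  when \<open>n = 2\<close>); then the product of the \<open>a\<^sub>j\<close>, \<open>j \<noteq> k\<^sub>0\<close>, lies in every \<open>I\<^sub>j\<close> except \<open>I\<^sub>k\<^sub>0\<close>, and
  adding \<open>a\<^sub>k\<^sub>0\<close> to it gives an element of \<open>I\<close> outside the cover.
  A radical ideal \<open>J\<close> not containing \<open>I\<close> lies in a prime ideal not containing \<open>I\<close>: for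
  \<open>a \<in> I - J\<close>, a radical ideal maximal (Zorn) among those containing \<open>J\<close> and avoiding \<open>a\<close>
  is prime. Replacing the radical members of the cover by such primes reduces the theorem to
  prime avoidance.\<close>

context ring
begin

lemma ideal_add_cancel_left:
  assumes "ideal J R" "x \<in> J" "y \<in> carrier R" "x \<oplus> y \<in> J"
  shows "y \<in> J"
proof -
  interpret J: ideal J R by fact
  have "x \<in> carrier R"
    using assms(2) J.Icarr by blast
  then have "y = \<ominus> x \<oplus> (x \<oplus> y)"
    using assms(3) by (simp add: a_assoc[symmetric] l_neg)
  also have "\<dots> \<in> J"
    using assms(2,4) by simp
  finally show ?thesis .
qed

lemma add_notin_Union_ideals:
  assumes ideals: "\<And>k. k \<in> K \<Longrightarrow> ideal (Is k) R"
    and x: "x \<in> carrier R" "x \<in> Is k\<^sub>0" "\<And>j. j \<in> K \<Longrightarrow> j \<noteq> k\<^sub>0 \<Longrightarrow> x \<notin> Is j"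
    and y: "y \<in> carrier R" "y \<notin> Is k\<^sub>0" "\<And>j. j \<in> K \<Longrightarrow> j \<noteq> k\<^sub>0 \<Longrightarrow> y \<in> Is j"
  shows "x \<oplus> y \<notin> (\<Union>k\<in>K. Is k)"
proof
  assume "x \<oplus> y \<in> (\<Union>k\<in>K. Is k)"
  then obtain j where j: "j \<in> K" "x \<oplus> y \<in> Is j"
    by blast
  show False
  proof (cases "j = k\<^sub>0")
    case True
    then show False
      using ideal_add_cancel_left[OF ideals[OF j(1)]] j x y by blast
  next
    case False
    have "y \<oplus> x \<in> Is j"
      using j x(1) y(1) by (simp add: a_comm)
    then show False
      using ideal_add_cancel_left[OF ideals[OF j(1)]] j False x y by blast
  qed
qed

lemma exists_Inter_notin_primeideal:
  assumes "finite A" "A \<noteq> {}" and P: "primeideal P R" and I: "ideal I R"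
    and "\<And>j. j \<in> A \<Longrightarrow> ideal (Is j) R" "\<And>j. j \<in> A \<Longrightarrow> f j \<in> I \<inter> Is j - P"
  shows "\<exists>p \<in> I \<inter> (\<Inter>j\<in>A. Is j). p \<notin> P"
  using assms(1,2,5,6)
proof (induction A rule: finite_ne_induct)
  case (singleton j)
  then show ?case by blast
next
  case (insert j A)
  then obtain p where p: "p \<in> I" "p \<notin> P" "\<And>i. i \<in> A \<Longrightarrow> p \<in> Is i"
    by blast
  have fj: "f j \<in> I" "f j \<in> Is j" "f j \<notin> P"
    using insert.prems by auto
  have carrier: "p \<in> carrier R" "f j \<in> carrier R"
    using p(1) fj(1) ideal.Icarr[OF I] by blast+
  have "f j \<otimes> p \<in> I" "f j \<otimes> p \<in> Is j"
    using ideal.I_r_closed[OF I fj(1)] ideal.I_r_closed[OF _ fj(2)] insert.prems(1) carrier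
    by auto
  moreover have "f j \<otimes> p \<in> Is i" if "i \<in> A" for i
    using ideal.I_l_closed[OF _ p(3)[OF that] carrier(2)] insert.prems(1) that by blast
  moreover have "f j \<otimes> p \<notin> P"
    using primeideal.I_prime[OF P carrier(2,1)] fj(3) p(2) by blast
  ultimately show ?case
    by blast
qed

lemma exists_element_in_all_but_one_ideal:
  assumes "finite K" "2 \<le> card K" and I: "ideal I R" and ideals: "\<And>k. k \<in> K \<Longrightarrow> ideal (Is k) R"
    and nonprime: "card {k \<in> K. \<not> primeideal (Is k) R} \<le> 2"
    and a: "\<And>k. k \<in> K \<Longrightarrow> a k \<in> I \<inter> Is k"
      "\<And>k j. k \<in> K \<Longrightarrow> j \<in> K \<Longrightarrow> j \<noteq> k \<Longrightarrow> a k \<notin> Is j"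
  shows "\<exists>k\<^sub>0\<in>K. \<exists>p\<in>I. p \<notin> Is k\<^sub>0 \<and> (\<forall>j\<in>K - {k\<^sub>0}. p \<in> Is j)"
proof (cases "card K = 2")
  case True
  then obtain k\<^sub>1 k\<^sub>2 where K: "K = {k\<^sub>1, k\<^sub>2}" "k\<^sub>1 \<noteq> k\<^sub>2"
    by (meson card_2_iff)
  then have "a k\<^sub>2 \<in> I \<inter> Is k\<^sub>2" "a k\<^sub>2 \<notin> Is k\<^sub>1"
    using a(1)[of k\<^sub>2] a(2)[of k\<^sub>2 k\<^sub>1] by auto
  then show ?thesis
    using K by blast
next
  case False
  with \<open>2 \<le> card K\<close> have "{k \<in> K. \<not> primeideal (Is k) R} \<noteq> K"
    using nonprime by force
  then obtain k\<^sub>0 where k\<^sub>0: "k\<^sub>0 \<in> K" "primeideal (Is k\<^sub>0) R"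
    by blast
  have "K - {k\<^sub>0} \<noteq> {}"
  proof
    assume "K - {k\<^sub>0} = {}"
    then have "K = {k\<^sub>0}"
      using k\<^sub>0(1) by blast
    then show False
      using \<open>2 \<le> card K\<close> by simp
  qed
  have "\<exists>p \<in> I \<inter> (\<Inter>j\<in>K - {k\<^sub>0}. Is j). p \<notin> Is k\<^sub>0"
  proof (rule exists_Inter_notin_primeideal[where f = a, OF _ \<open>K - {k\<^sub>0} \<noteq> {}\<close> k\<^sub>0(2) I])
    show "finite (K - {k\<^sub>0})"
      using \<open>finite K\<close> by blast
    show "ideal (Is j) R" if "j \<in> K - {k\<^sub>0}" for j
      using ideals that by blast
    show "a j \<in> I \<inter> Is j - Is k\<^sub>0" if "j \<in> K - {k\<^sub>0}" for j
      using a(1)[of j] a(2)[of j k\<^sub>0] k\<^sub>0(1) that by blast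
  qed
  then show ?thesis
    using k\<^sub>0(1) by blast
qed

lemma irredundant_ideal_cover_card_le_1:
  assumes "finite K" and I: "ideal I R" and ideals: "\<And>k. k \<in> K \<Longrightarrow> ideal (Is k) R"
    and cover: "I \<subseteq> (\<Union>k\<in>K. Is k)"
    and nonprime: "card {k \<in> K. \<not> primeideal (Is k) R} \<le> 2"
    and irredundant: "\<And>k. k \<in> K \<Longrightarrow> \<not> I \<subseteq> (\<Union>j\<in>K - {k}. Is j)"
  shows "card K \<le> 1"
proof (rule ccontr)
  assume "\<not> card K \<le> 1"
  have "\<forall>k\<in>K. \<exists>x. x \<in> I \<and> x \<notin> (\<Union>j\<in>K - {k}. Is j)"
    using irredundant by blast
  then obtain a where a: "\<And>k. k \<in> K \<Longrightarrow> a k \<in> I \<and> a k \<notin> (\<Union>j\<in>K - {k}. Is j)"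
    by (metis bchoice)
  have a_mem: "a k \<in> I \<inter> Is k" if "k \<in> K" for k
    using a[OF that] cover by blast
  have a_notin: "a k \<notin> Is j" if "k \<in> K" "j \<in> K" "j \<noteq> k" for k j
    using a[OF that(1)] that(2,3) by blast
  have "2 \<le> card K"
    using \<open>\<not> card K \<le> 1\<close> by linarith
  then obtain k\<^sub>0 p where k\<^sub>0: "k\<^sub>0 \<in> K"
    and p: "p \<in> I" "p \<notin> Is k\<^sub>0" "\<And>j. j \<in> K \<Longrightarrow> j \<noteq> k\<^sub>0 \<Longrightarrow> p \<in> Is j"
    using exists_element_in_all_but_one_ideal[of K I Is a,
          OF \<open>finite K\<close> _ I ideals nonprime a_mem a_notin] by blast
  have carrier: "a k\<^sub>0 \<in> carrier R" "p \<in> carrier R"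
    using a_mem[OF k\<^sub>0] p(1) ideal.Icarr[OF I] by blast+
  have "a k\<^sub>0 \<oplus> p \<notin> (\<Union>k\<in>K. Is k)"
    by (rule add_notin_Union_ideals[of K Is, OF ideals carrier(1) _ a_notin[OF k\<^sub>0] carrier(2) p(2,3)])
      (use a_mem[OF k\<^sub>0] in auto)
  moreover have "a k\<^sub>0 \<oplus> p \<in> I"
    using a_mem[OF k\<^sub>0] p(1) additive_subgroup.a_closed[OF ideal.axioms(1)[OF I]] by blast
  ultimately show False
    using cover by blast
qed

theorem prime_avoidance:
  assumes "finite K" "ideal I R" "\<And>k. k \<in> K \<Longrightarrow> ideal (Is k) R"
    and "I \<subseteq> (\<Union>k\<in>K. Is k)" "card {k \<in> K. \<not> primeideal (Is k) R} \<le> 2"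
  shows "\<exists>k\<in>K. I \<subseteq> Is k"
  using assms
proof (induction K rule: finite_psubset_induct)
  case (psubset K)
  note I = psubset.prems(1) and ideals = psubset.prems(2)
    and cover = psubset.prems(3) and nonprime = psubset.prems(4)
  show ?case
  proof (cases "\<exists>k\<in>K. I \<subseteq> (\<Union>j\<in>K - {k}. Is j)")
    case True
    then obtain k where k: "k \<in> K" "I \<subseteq> (\<Union>j\<in>K - {k}. Is j)"
      by blast
    have "\<exists>j\<in>K - {k}. I \<subseteq> Is j"
    proof (rule psubset.IH)
      show "K - {k} \<subset> K"
        using k(1) by blast
      show "ideal (Is j) R" if "j \<in> K - {k}" for j
        using ideals that by blast
      have "card {j \<in> K - {k}. \<not> primeideal (Is j) R} \<le> card {j \<in> K. \<not> primeideal (Is j) R}"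
        using psubset.hyps by (intro card_mono) auto
      then show "card {j \<in> K - {k}. \<not> primeideal (Is j) R} \<le> 2"
        using nonprime by linarith
    qed (use I k(2) in auto)
    then show ?thesis
      by blast
  next
    case False
    then have "card K \<le> 1"
      using irredundant_ideal_cover_card_le_1[OF psubset.hyps I ideals cover nonprime] by blast
    moreover obtain k where "k \<in> K" "\<zero> \<in> Is k"
      using cover additive_subgroup.zero_closed[OF ideal.axioms(1)[OF I]] by blast
    ultimately have "K = {k}"
      using card_le_Suc0_iff_eq[OF psubset.hyps] by auto
    then show ?thesis
      using cover by blast
  qed
qed

lemma radical_ideal_iff:
  "radical_ideal R J \<longleftrightarrow> ideal J R \<and> (\<forall>x\<in>carrier R. \<forall>m::nat. x [^] m \<in> J \<longrightarrow> x \<in> J)"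
proof -
  have "J \<subseteq> ideal_radical R J" if "ideal J R"
  proof
    fix x
    assume "x \<in> J"
    then have "x \<in> carrier R" "x [^] (1::nat) \<in> J"
      using ideal.Icarr[OF that] by auto
    then show "x \<in> ideal_radical R J"
      unfolding ideal_radical_def by blast
  qed
  then show ?thesis
    unfolding radical_ideal_def ideal_radical_def by blast
qed

lemma radical_idealD:
  assumes "radical_ideal R J" "x \<in> carrier R" "x [^] (m::nat) \<in> J"
  shows "x \<in> J"
  using assms unfolding radical_ideal_iff by blast

lemma radical_ideal_chain_Union:
  assumes "C \<noteq> {}" "subset.chain {J. radical_ideal R J} C"
  shows "radical_ideal R (\<Union>C)"
  unfolding radical_ideal_iff
proof (intro conjI ballI allI impI)
  have "subset.chain {J. ideal J R} C"
    using assms(2) unfolding pred_on.chain_def radical_ideal_iff by blast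
  then show "ideal (\<Union>C) R"
    using chain_Union_is_ideal[of C] assms(1) by simp
  fix x and m :: nat
  assume x: "x \<in> carrier R" and "x [^] m \<in> \<Union>C"
  then obtain J where "J \<in> C" "x [^] m \<in> J" by blast
  moreover have "radical_ideal R J" if "J \<in> C" for J
    using assms(2) that unfolding pred_on.chain_def by blast
  ultimately show "x \<in> \<Union>C"
    using x radical_idealD by blast
qed

end

context cring
begin

lemma radical_ideal_quotient:
  assumes J: "radical_ideal R J" and c: "c \<in> carrier R"
  shows "radical_ideal R {x \<in> carrier R. c \<otimes> x \<in> J}"
  unfolding radical_ideal_iff
proof (intro conjI ballI allI impI)
  interpret J: ideal J R
    using J radical_ideal_iff by blast
  show "ideal {x \<in> carrier R. c \<otimes> x \<in> J} R"
    using J.helper_max_prime[OF is_cring c] .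
  fix x and m :: nat
  assume x: "x \<in> carrier R" and "x [^] m \<in> {x \<in> carrier R. c \<otimes> x \<in> J}"
  then have "c \<otimes> x [^] m \<in> J" by simp
  then have "(c [^] m \<otimes> x) \<otimes> (c \<otimes> x [^] m) \<in> J"
    using c x by (simp add: J.I_l_closed)
  also have "(c [^] m \<otimes> x) \<otimes> (c \<otimes> x [^] m) = (c \<otimes> x) [^] Suc m"
    using c x by (simp add: nat_pow_distrib m_ac)
  finally have "c \<otimes> x \<in> J"
    using J c x radical_idealD by blast
  then show "x \<in> {x \<in> carrier R. c \<otimes> x \<in> J}"
    using x by blast
qed

text \<open>A radical ideal maximal among those avoiding \<open>a\<close> is prime: each ideal quotient
  \<open>(P : c) = {x. c \<otimes> x \<in> P} \<supseteq> P\<close> is radical, so it either equals \<open>P\<close> or contains \<open>a\<close>.\<close>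
lemma maximal_radical_ideal_avoiding_primeideal:
  assumes P: "radical_ideal R P" and a: "a \<in> carrier R" "a \<notin> P"
    and maximal: "\<And>Q. radical_ideal R Q \<Longrightarrow> P \<subseteq> Q \<Longrightarrow> a \<notin> Q \<Longrightarrow> Q = P"
  shows "primeideal P R"
proof -
  interpret P: ideal P R
    using P radical_ideal_iff by blast
  have quotient_cases: "{x \<in> carrier R. c \<otimes> x \<in> P} = P \<or> c \<otimes> a \<in> P"
    if c: "c \<in> carrier R" for c
  proof -
    have "P \<subseteq> {x \<in> carrier R. c \<otimes> x \<in> P}"
      using c P.I_l_closed P.Icarr by blast
    then show ?thesis
      using maximal radical_ideal_quotient[OF P c] a by blast
  qed
  show ?thesis
  proof (rule primeidealI[OF P.is_ideal is_cring])
    show "carrier R \<noteq> P"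
      using a by blast
    fix x y
    assume xy: "x \<in> carrier R" "y \<in> carrier R" "x \<otimes> y \<in> P"
    show "x \<in> P \<or> y \<in> P"
    proof (rule ccontr)
      assume "\<not> (x \<in> P \<or> y \<in> P)"
      then have "{z \<in> carrier R. x \<otimes> z \<in> P} \<noteq> P"
        using xy by blast
      then have "x \<otimes> a \<in> P"
        using quotient_cases[OF xy(1)] by blast
      then have "a \<otimes> x \<in> P"
        using m_comm[OF a(1) xy(1)] by simp
      then have "{z \<in> carrier R. a \<otimes> z \<in> P} \<noteq> P"
        using \<open>\<not> (x \<in> P \<or> y \<in> P)\<close> xy by blast
      then have "a \<otimes> a \<in> P"
        using quotient_cases[OF a(1)] by blast
      moreover have "a [^] (2::nat) = a \<otimes> a"
        using a by (simp add: numeral_2_eq_2)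
      ultimately have "a [^] (2::nat) \<in> P"
        by simp
      then show False
        using P a radical_idealD by blast
    qed
  qed
qed

lemma exists_primeideal_avoiding:
  assumes J: "radical_ideal R J" and a: "a \<in> carrier R" "a \<notin> J"
  obtains P where "primeideal P R" "J \<subseteq> P" "a \<notin> P"
proof -
  let ?F = "{P. radical_ideal R P \<and> J \<subseteq> P \<and> a \<notin> P}"
  have "\<exists>M\<in>?F. \<forall>Q\<in>?F. M \<subseteq> Q \<longrightarrow> Q = M"
  proof (rule subset_Zorn_nonempty)
    show "?F \<noteq> {}"
      using assms by blast
    fix C
    assume C: "C \<noteq> {}" "subset.chain ?F C"
    then have "C \<subseteq> ?F" "subset.chain {P. radical_ideal R P} C"
      unfolding pred_on.chain_def by blast+
    then show "\<Union>C \<in> ?F"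
      using C(1) radical_ideal_chain_Union by blast
  qed
  then obtain P where P: "P \<in> ?F" and maximal: "\<forall>Q\<in>?F. P \<subseteq> Q \<longrightarrow> Q = P"
    by blast
  have "primeideal P R"
  proof (rule maximal_radical_ideal_avoiding_primeideal[OF _ a(1)])
    show "radical_ideal R P" "a \<notin> P"
      using P by auto
    show "Q = P" if "radical_ideal R Q" "P \<subseteq> Q" "a \<notin> Q" for Q
      using maximal P that by blast
  qed
  then show thesis
    using that P by blast
qed

lemma radical_ideal_primeideal_not_containing:
  assumes J: "radical_ideal R J" and I: "ideal I R" and "\<not> I \<subseteq> J"
  shows "\<exists>P. primeideal P R \<and> J \<subseteq> P \<and> \<not> I \<subseteq> P"
proof -
  obtain a where a: "a \<in> I" "a \<notin> J"
    using \<open>\<not> I \<subseteq> J\<close> by blast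
  then have "a \<in> carrier R"
    using ideal.Icarr[OF I] by blast
  then obtain P where "primeideal P R" "J \<subseteq> P" "a \<notin> P"
    using exists_primeideal_avoiding[OF J] a(2) by blast
  then show ?thesis
    using a(1) by blast
qed

lemma radical_ideal_avoidance:
  assumes "finite K" and I: "ideal I R" and ideals: "\<And>k. k \<in> K \<Longrightarrow> ideal (Is k) R"
    and cover: "I \<subseteq> (\<Union>k\<in>K. Is k)"
    and nonradical: "card {k \<in> K. \<not> radical_ideal R (Is k)} \<le> 2"
  shows "\<exists>k\<in>K. I \<subseteq> Is k"
proof (rule ccontr)
  assume not_contained: "\<not> (\<exists>k\<in>K. I \<subseteq> Is k)"
  have "\<forall>k\<in>{k \<in> K. radical_ideal R (Is k)}. \<exists>P. primeideal P R \<and> Is k \<subseteq> P \<and> \<not> I \<subseteq> P"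
    using radical_ideal_primeideal_not_containing[OF _ I] not_contained by blast
  then have "\<exists>P. \<forall>k\<in>{k \<in> K. radical_ideal R (Is k)}. primeideal (P k) R \<and> Is k \<subseteq> P k \<and> \<not> I \<subseteq> P k"
    by (rule bchoice)
  then obtain P where P: "\<And>k. k \<in> K \<Longrightarrow> radical_ideal R (Is k) \<Longrightarrow>
      primeideal (P k) R \<and> Is k \<subseteq> P k \<and> \<not> I \<subseteq> P k"
    by auto
  define Js where "Js k = (if radical_ideal R (Is k) then P k else Is k)" for k
  have "\<exists>k\<in>K. I \<subseteq> Js k"
  proof (rule prime_avoidance[OF \<open>finite K\<close> I])
    show "ideal (Js k) R" if "k \<in> K" for k
      using P[OF that] ideals[OF that] primeideal.axioms(1) unfolding Js_def by auto
    have "Is k \<subseteq> Js k" if "k \<in> K" for k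
      using P[OF that] unfolding Js_def by auto
    then show "I \<subseteq> (\<Union>k\<in>K. Js k)"
      using cover by blast
    have "{k \<in> K. \<not> primeideal (Js k) R} \<subseteq> {k \<in> K. \<not> radical_ideal R (Is k)}"
      using P unfolding Js_def by auto
    then have "card {k \<in> K. \<not> primeideal (Js k) R} \<le> card {k \<in> K. \<not> radical_ideal R (Is k)}"
      using \<open>finite K\<close> by (intro card_mono) auto
    then show "card {k \<in> K. \<not> primeideal (Js k) R} \<le> 2"
      using nonradical by linarith
  qed
  then obtain k where k: "k \<in> K" "I \<subseteq> Js k"
    by blast
  show False
  proof (cases "radical_ideal R (Is k)")
    case True
    then show False
      using P[OF k(1)] k(2) unfolding Js_def by simp
  next
    case False
    then show False
      using not_contained k unfolding Js_def by simp
  qed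
qed

end

theorem theorem2p1:
  fixes R :: "('a, 'b) ring_scheme" (structure)
    and I :: "'a set" and Is :: "nat \<Rightarrow> 'a set" and n :: nat
  assumes "cring R"
    and "\<one>\<^bsub>R\<^esub> \<noteq> \<zero>\<^bsub>R\<^esub>"
    and "ideal I R"
    and "\<forall>k\<in>{1..n}. ideal (Is k) R"
    and "I \<subseteq> (\<Union>k\<in>{1..n}. Is k)"
    and "card {k\<in>{1..n}. \<not> radical_ideal R (Is k)} \<le> 2"
  shows "\<exists>k\<in>{1..n}. I \<subseteq> Is k"
proof -
  interpret cring R by fact
  show ?thesis
    using radical_ideal_avoidance[OF finite_atLeastAtMost assms(3) _ assms(5,6)] assms(4)
    by blast
qed

end
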